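(* Let $n\in\mathbb N$, $w>0$, and $\overrightarrow{P}=(p_1,\dots,p_n)$ with $1\le p_1\le p_2\le\cdots\le p_n<\infty$. Let $\Delta^{\overrightarrow{P}}(\mathbb R^n)$ be the set of all bounded measurable functions $f:\mathbb R^n\to\mathbb R$ such that $\|(f(x_{\mathbf k}))_{\mathbf k\in\mathbb Z^n}\|_{\ell^{\overrightarrow P}_w}<\infty$ for every relatively separated set $(x_{\mathbf k})_{\mathbf k\in\mathbb Z^n}$ in $\mathbb R^n$. Then $\Delta^{\overrightarrow{P}}(\mathbb R^n)$ is a proper subspace of $L^{\overrightarrow{P}}(\mathbb R^n)$, and the map $\|f\|_{\Delta^{\overrightarrow P}}:=\big\|\big(f(\tfrac{\mathbf k}{w})\big)_{\mathbf k\in\mathbb Z^n}\big\|_{\ell^{\overrightarrow P}_w}$ is a seminorm on $\Delta^{\overrightarrow{P}}(\mathbb R^n)$.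
   Context: The mixed norm Lebesgue space $L^{\overrightarrow P}(\mathbb R^n)$ consists of measurable $f:\mathbb R^n\to\mathbb R$ with $\|f\|_{\overrightarrow P}=\Big(\int_{\mathbb R}\cdots\Big(\int_{\mathbb R}\Big(\int_{\mathbb R}|f(x_1,\dots,x_n)|^{p_1}dx_1\Big)^{p_2/p_1}dx_2\Big)^{p_3/p_2}\cdots dx_n\Big)^{1/p_n}<\infty$. For a sequence $x=(x(k_1,\dots,k_n))_{\mathbf k\in\mathbb Z^n}$, the weighted mixed norm is $\|x\|_{\ell^{\overrightarrow P}_w}=\Big(\frac1w\sum_{k_n\in\mathbb Z}\cdots\Big(\frac1w\sum_{k_2\in\mathbb Z}\Big(\frac1w\sum_{k_1\in\mathbb Z}|x(k_1,\dots,k_n)|^{p_1}\Big)^{p_2/p_1}\Big)^{p_3/p_2}\cdots\Big)^{1/p_n}$. A countable set $\Gamma\subset\mathbb R^n$ is relatively separated with gap $\kappa>0$ if $\inf_{\mathbf x\in\mathbb R^n}\sum_{\gamma\in\Gamma}\chi_{B(\gamma;\kappa/2)}(\mathbf x)\ge1$ and $\sup_{\mathbf x\in\mathbb R^n}\sum_{\gamma\in\Gamma}\chi_{B(\gamma;\kappa/2)}(\mathbf x)<\infty$, where $B(\gamma;r)$ is the open cube (ball for $\|\cdot\|_\infty$) centered at $\gamma$ with side length $2r$; a relatively separated set $(x_{\mathbf k})_{\mathbf k\in\mathbb Z^n}$ means such a set indexed by $\mathbb Z^n$. *)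

theory Defs
  imports "HOL-Analysis.Analysis"
begin

text \<open>Points of R^n are functions nat => real, extensional outside {..<n}
  (coordinates x_1..x_n are the indices 0..n-1). Exponents p_1..p_n are p 0 .. p (n-1).\<close>

definition epowr :: "ennreal \<Rightarrow> real \<Rightarrow> ennreal" where
  "epowr a r = (if a = \<infinity> then \<infinity> else ennreal (enn2real a powr r))"

definition Rn :: "nat \<Rightarrow> (nat \<Rightarrow> real) set" where
  "Rn n = PiE {..<n} (\<lambda>_. UNIV)"

definition Zn :: "nat \<Rightarrow> (nat \<Rightarrow> int) set" where
  "Zn n = PiE {..<n} (\<lambda>_. UNIV)"

definition lebRn :: "nat \<Rightarrow> (nat \<Rightarrow> real) measure" where
  "lebRn n = PiM {..<n} (\<lambda>_. lborel)"

text \<open>Iterated mixed norm: stage j integrates out coordinate j (innermost first).\<close>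
fun mixed_aux :: "(nat \<Rightarrow> real) \<Rightarrow> ((nat \<Rightarrow> real) \<Rightarrow> real) \<Rightarrow> nat \<Rightarrow> (nat \<Rightarrow> real) \<Rightarrow> ennreal" where
  "mixed_aux p f 0 x = ennreal \<bar>f x\<bar>"
| "mixed_aux p f (Suc j) x =
     epowr (\<integral>\<^sup>+ t. epowr (mixed_aux p f j (x(j := t))) (p j) \<partial>lborel) (1 / p j)"

definition mixed_norm :: "nat \<Rightarrow> (nat \<Rightarrow> real) \<Rightarrow> ((nat \<Rightarrow> real) \<Rightarrow> real) \<Rightarrow> ennreal" where
  "mixed_norm n p f = mixed_aux p f n (\<lambda>_. undefined)"

definition LP :: "nat \<Rightarrow> (nat \<Rightarrow> real) \<Rightarrow> ((nat \<Rightarrow> real) \<Rightarrow> real) set" where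
  "LP n p = {f. f \<in> borel_measurable (lebRn n) \<and> mixed_norm n p f < \<infinity>}"

fun wseq_aux :: "real \<Rightarrow> (nat \<Rightarrow> real) \<Rightarrow> ((nat \<Rightarrow> int) \<Rightarrow> real) \<Rightarrow> nat \<Rightarrow> (nat \<Rightarrow> int) \<Rightarrow> ennreal" where
  "wseq_aux w p c 0 k = ennreal \<bar>c k\<bar>"
| "wseq_aux w p c (Suc j) k =
     epowr (ennreal (1 / w) *
            (\<integral>\<^sup>+ t. epowr (wseq_aux w p c j (k(j := t))) (p j) \<partial>count_space UNIV)) (1 / p j)"

definition wseq_norm :: "nat \<Rightarrow> real \<Rightarrow> (nat \<Rightarrow> real) \<Rightarrow> ((nat \<Rightarrow> int) \<Rightarrow> real) \<Rightarrow> ennreal" where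
  "wseq_norm n w p c = wseq_aux w p c n (\<lambda>_. undefined)"

definition cube :: "nat \<Rightarrow> (nat \<Rightarrow> real) \<Rightarrow> real \<Rightarrow> (nat \<Rightarrow> real) set" where
  "cube n g r = {y \<in> Rn n. \<forall>i<n. \<bar>y i - g i\<bar> < r}"

text \<open>Relatively separated family indexed by Z^n (sums counted with multiplicity over indices).\<close>
definition rel_separated :: "nat \<Rightarrow> ((nat \<Rightarrow> int) \<Rightarrow> (nat \<Rightarrow> real)) \<Rightarrow> bool" where
  "rel_separated n X \<longleftrightarrow> (\<forall>k\<in>Zn n. X k \<in> Rn n) \<and>
     (\<exists>\<kappa>>0. (\<forall>y\<in>Rn n. 1 \<le> card {k\<in>Zn n. y \<in> cube n (X k) (\<kappa>/2)}) \<and>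
            (\<exists>N::nat. \<forall>y\<in>Rn n. finite {k\<in>Zn n. y \<in> cube n (X k) (\<kappa>/2)} \<and>
                                card {k\<in>Zn n. y \<in> cube n (X k) (\<kappa>/2)} \<le> N))"

definition Delta :: "nat \<Rightarrow> real \<Rightarrow> (nat \<Rightarrow> real) \<Rightarrow> ((nat \<Rightarrow> real) \<Rightarrow> real) set" where
  "Delta n w p = {f. f \<in> borel_measurable (lebRn n) \<and> (\<exists>B. \<forall>x\<in>Rn n. \<bar>f x\<bar> \<le> B) \<and>
      (\<forall>X. rel_separated n X \<longrightarrow> wseq_norm n w p (\<lambda>k. f (X k)) < \<infinity>)}"

definition delta_norm :: "nat \<Rightarrow> real \<Rightarrow> (nat \<Rightarrow> real) \<Rightarrow> ((nat \<Rightarrow> real) \<Rightarrow> real) \<Rightarrow> ennreal" where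
  "delta_norm n w p f =
     wseq_norm n w p (\<lambda>k. f (\<lambda>i. if i < n then real_of_int (k i) / w else undefined))"

end

theory Submission
  imports Defs
begin

text \<open>
  Let f be in Delta. In every cell of the grid w^-1 Z^n choose a point where |f| is at least half
  of its supremum over the cell; the chosen points form a relatively separated family, so their
  values have finite weighted sequence norm. Now |f| is dominated by twice the step function
  carrying these values, and the mixed norm of a step function on the grid equals the weighted
  sequence norm of its values (every cell has side 1/w, whence the weight), so f lies in L^P.
  The inclusion is proper because x_1^(-1/(2 p_1)) on (0,1] \<times> [0,1)^(n-1) lies in L^P
  but is essentially unbounded, whereas members of Delta are bounded.
  Homogeneity and Minkowski's inequality for the weighted sequence norm, applied one coordinate
  at a time, give the closure of Delta under linear combinations and the seminorm properties;
  the grid itself is relatively separated, which makes the seminorm finite.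
\<close>

lemma epowr_ennreal: "0 \<le> a \<Longrightarrow> epowr (ennreal a) r = ennreal (a powr r)"
  by (simp add: epowr_def)

lemma epowr_top [simp]: "epowr top r = top"
  by (simp add: epowr_def)

lemma epowr_0 [simp]: "epowr 0 r = 0"
  by (simp add: epowr_def)

lemma epowr_eq_0_iff [simp]: "epowr x r = 0 \<longleftrightarrow> x = 0"
  by (cases x) (simp_all add: epowr_ennreal)

lemma epowr_mono:
  assumes "0 \<le> r" "a \<le> b"
  shows "epowr a r \<le> epowr b r"
proof (cases "b = top")
  case False
  with assms(2) obtain a' b' where "a = ennreal a'" "b = ennreal b'" "0 \<le> a'" "a' \<le> b'"
    by (cases a; cases b) (auto simp: top_unique)
  with assms(1) show ?thesis
    by (simp add: epowr_ennreal powr_mono2)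
qed simp

lemma epowr_mult_ennreal:
  assumes "0 \<le> a" "0 < r"
  shows "epowr (ennreal a * x) r = ennreal (a powr r) * epowr x r"
proof (cases x)
  case (real y)
  with assms show ?thesis
    by (simp add: epowr_ennreal powr_mult flip: ennreal_mult)
next
  case top
  with assms show ?thesis
    by (cases "a = 0") (simp_all add: ennreal_mult_top)
qed

section \<open>Minkowski's inequality for sequences\<close>

lemma powr_add_le_weighted:
  fixes x y p t :: real
  assumes p: "1 \<le> p" and t: "0 < t" "t < 1" and xy: "0 \<le> x" "0 \<le> y"
  shows "(x + y) powr p \<le> t powr (1 - p) * x powr p + (1 - t) powr (1 - p) * y powr p"
proof -
  have ge1: "1 \<le> \<mu> powr (1 - p)" if "0 < \<mu>" "\<mu> \<le> 1" for \<mu> :: real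
    using powr_mono'[of "1 - p" 0 \<mu>] that p by simp
  consider "x = 0" | "y = 0" | "0 < x" "0 < y"
    using xy by linarith
  then show ?thesis
  proof cases
    case 1
    then show ?thesis
      using ge1[of "1 - t"] t by (simp add: mult_le_cancel_right1)
  next
    case 2
    then show ?thesis
      using ge1[of t] t by (simp add: mult_le_cancel_right1)
  next
    case 3
    have "((1 - t) *\<^sub>R (y / (1 - t)) + t *\<^sub>R (x / t)) powr p
        \<le> (1 - t) * (y / (1 - t)) powr p + t * (x / t) powr p"
      using convex_onD[OF powr_convex[OF p], of t "y / (1 - t)" "x / t"] 3 t by simp
    moreover have "\<mu> * (z / \<mu>) powr p = \<mu> powr (1 - p) * z powr p" if "0 < \<mu>" "0 < z" for \<mu> z :: real
      using that by (simp add: powr_divide powr_diff)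
    ultimately show ?thesis
      using 3 t by (simp add: add.commute)
  qed
qed

lemma nn_integral_powr_add_le:
  fixes f g :: "'a \<Rightarrow> real"
  assumes p: "1 \<le> p" and AB: "0 < A" "0 < B"
    and meas: "f \<in> borel_measurable M" "g \<in> borel_measurable M"
    and nonneg: "\<And>x. 0 \<le> f x" "\<And>x. 0 \<le> g x"
    and f: "(\<integral>\<^sup>+x. ennreal (f x powr p) \<partial>M) = ennreal (A powr p)"
    and g: "(\<integral>\<^sup>+x. ennreal (g x powr p) \<partial>M) = ennreal (B powr p)"
  shows "(\<integral>\<^sup>+x. ennreal ((f x + g x) powr p) \<partial>M) \<le> ennreal ((A + B) powr p)"
proof -
  define t where "t = A / (A + B)"
  have t: "0 < t" "t < 1" "t * (A + B) = A" "(1 - t) * (A + B) = B"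
    using AB by (auto simp: t_def field_simps)
  have weight: "s powr (1 - p) * (s * (A + B)) powr p = s * (A + B) powr p" if "0 < s" for s
    using that AB by (simp add: powr_mult powr_diff)
  have "(\<integral>\<^sup>+x. ennreal ((f x + g x) powr p) \<partial>M)
      \<le> (\<integral>\<^sup>+x. ennreal (t powr (1 - p)) * ennreal (f x powr p)
                + ennreal ((1 - t) powr (1 - p)) * ennreal (g x powr p) \<partial>M)"
    using powr_add_le_weighted[OF p t(1,2) nonneg]
    by (intro nn_integral_mono) (simp add: ennreal_leI flip: ennreal_mult ennreal_plus)
  also have "\<dots> = ennreal (t powr (1 - p) * A powr p + (1 - t) powr (1 - p) * B powr p)"
    using meas by (simp add: nn_integral_add nn_integral_cmult f g ennreal_mult)
  also have "t powr (1 - p) * A powr p + (1 - t) powr (1 - p) * B powr p = (A + B) powr p"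
    using weight[of t] weight[of "1 - t"] t by (simp add: algebra_simps)
  finally show ?thesis .
qed

lemma minkowski_count_space:
  fixes b c :: "'a \<Rightarrow> ennreal"
  assumes p: "1 \<le> p"
  shows "epowr (\<integral>\<^sup>+t. epowr (b t + c t) p \<partial>count_space UNIV) (1 / p)
    \<le> epowr (\<integral>\<^sup>+t. epowr (b t) p \<partial>count_space UNIV) (1 / p)
     + epowr (\<integral>\<^sup>+t. epowr (c t) p \<partial>count_space UNIV) (1 / p)"
    (is "epowr ?Ibc _ \<le> epowr ?Ib _ + epowr ?Ic _")
proof (cases "?Ib = top \<or> ?Ic = top")
  case False
  have finite_point: "h t \<noteq> top"
    if "(\<integral>\<^sup>+t. epowr (h t) p \<partial>count_space UNIV) \<noteq> top" for h :: "'a \<Rightarrow> ennreal" and t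
    using nn_integral_ge_point[of t UNIV "\<lambda>t. epowr (h t) p"] that by (auto simp: top_unique)
  obtain \<beta> \<gamma> where b: "b = (\<lambda>t. ennreal (\<beta> t))" "\<And>t. 0 \<le> \<beta> t"
    and c: "c = (\<lambda>t. ennreal (\<gamma> t))" "\<And>t. 0 \<le> \<gamma> t"
    using finite_point[of b] finite_point[of c] False
    by (intro that[of "\<lambda>t. enn2real (b t)" "\<lambda>t. enn2real (c t)"])
       (auto simp: fun_eq_iff ennreal_enn2real_if)
  obtain A B where A: "?Ib = ennreal (A powr p)" "0 \<le> A" and B: "?Ic = ennreal (B powr p)" "0 \<le> B"
    using False p
    by (intro that[of "enn2real ?Ib powr (1 / p)" "enn2real ?Ic powr (1 / p)"])
       (auto simp: powr_powr ennreal_enn2real_if)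
  have root: "epowr (ennreal (x powr p)) (1 / p) = ennreal x" if "0 \<le> x" for x
    using that p by (simp add: epowr_ennreal powr_powr)
  consider "A = 0" | "B = 0" | "0 < A" "0 < B"
    using A B by linarith
  then show ?thesis
  proof cases
    case 1
    then have "b = (\<lambda>_. 0)"
      using nn_integral_ge_point[of _ UNIV "\<lambda>t. epowr (b t) p"] A by (auto simp: fun_eq_iff)
    then show ?thesis
      by simp
  next
    case 2
    then have "c = (\<lambda>_. 0)"
      using nn_integral_ge_point[of _ UNIV "\<lambda>t. epowr (c t) p"] B by (auto simp: fun_eq_iff)
    then show ?thesis
      by simp
  next
    case 3
    have "?Ibc = (\<integral>\<^sup>+t. ennreal ((\<beta> t + \<gamma> t) powr p) \<partial>count_space UNIV)"
      using b c by (simp add: epowr_ennreal flip: ennreal_plus)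
    also have "\<dots> \<le> ennreal ((A + B) powr p)"
      using A B b c p 3 by (intro nn_integral_powr_add_le) (simp_all add: epowr_ennreal)
    finally have "epowr ?Ibc (1 / p) \<le> epowr (ennreal ((A + B) powr p)) (1 / p)"
      using p by (intro epowr_mono) auto
    then show ?thesis
      using 3 by (simp add: A B root)
  qed
qed (auto simp: add_top)

lemma wseq_aux_zero [simp]: "wseq_aux w p (\<lambda>_. 0) j k = 0"
  by (induction j arbitrary: k) simp_all

lemma wseq_aux_cmult:
  assumes "\<And>i. i < j \<Longrightarrow> 0 < p i"
  shows "wseq_aux w p (\<lambda>k. a * c k) j k = ennreal \<bar>a\<bar> * wseq_aux w p c j k"
  using assms
proof (induction j arbitrary: k)
  case 0
  then show ?case
    by (simp add: abs_mult ennreal_mult)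
next
  case (Suc j)
  then have pj: "0 < p j"
    by simp
  have "wseq_aux w p (\<lambda>k. a * c k) (Suc j) k
      = epowr (ennreal (\<bar>a\<bar> powr p j) * (ennreal (1 / w)
          * (\<integral>\<^sup>+t. epowr (wseq_aux w p c j (k(j := t))) (p j) \<partial>count_space UNIV))) (1 / p j)"
    using Suc pj by (simp add: epowr_mult_ennreal nn_integral_cmult mult.left_commute)
  also have "\<dots> = ennreal \<bar>a\<bar> * wseq_aux w p c (Suc j) k"
    using pj by (simp add: epowr_mult_ennreal powr_powr)
  finally show ?case .
qed

lemma wseq_aux_triangle:
  assumes "0 < w" "\<And>i. i < j \<Longrightarrow> 1 \<le> p i"
  shows "wseq_aux w p (\<lambda>k. c k + d k) j k \<le> wseq_aux w p c j k + wseq_aux w p d j k"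
  using assms(2)
proof (induction j arbitrary: k)
  case 0
  then show ?case
    by (simp add: ennreal_leI abs_triangle_ineq flip: ennreal_plus)
next
  case (Suc j)
  then have pj: "1 \<le> p j" "0 \<le> p j"
    by (simp_all add: order.trans[OF zero_le_one])
  define S where "S h = (\<integral>\<^sup>+t. epowr (h t) (p j) \<partial>count_space UNIV)" for h :: "int \<Rightarrow> ennreal"
  define U where "U t = wseq_aux w p c j (k(j := t))" for t
  define V where "V t = wseq_aux w p d j (k(j := t))" for t
  have "wseq_aux w p (\<lambda>k. c k + d k) (Suc j) k \<le> epowr (ennreal (1 / w) * S (\<lambda>t. U t + V t)) (1 / p j)"
    unfolding S_def U_def V_def using Suc pj
    by (auto intro!: epowr_mono mult_left_mono nn_integral_mono)
  also have "\<dots> = ennreal ((1 / w) powr (1 / p j)) * epowr (S (\<lambda>t. U t + V t)) (1 / p j)"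
    using pj(1) assms(1) by (simp add: epowr_mult_ennreal)
  also have "\<dots> \<le> ennreal ((1 / w) powr (1 / p j)) * (epowr (S U) (1 / p j) + epowr (S V) (1 / p j))"
    unfolding S_def by (intro mult_left_mono minkowski_count_space pj(1)) auto
  also have "\<dots> = wseq_aux w p c (Suc j) k + wseq_aux w p d (Suc j) k"
    using pj(1) assms(1) by (simp add: S_def U_def V_def epowr_mult_ennreal distrib_left)
  finally show ?case .
qed

lemma wseq_norm_cmult:
  "(\<And>i. i < n \<Longrightarrow> 0 < p i) \<Longrightarrow> wseq_norm n w p (\<lambda>k. a * c k) = ennreal \<bar>a\<bar> * wseq_norm n w p c"
  unfolding wseq_norm_def by (rule wseq_aux_cmult)

lemma wseq_norm_triangle:
  "0 < w \<Longrightarrow> (\<And>i. i < n \<Longrightarrow> 1 \<le> p i)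
    \<Longrightarrow> wseq_norm n w p (\<lambda>k. c k + d k) \<le> wseq_norm n w p c + wseq_norm n w p d"
  unfolding wseq_norm_def by (rule wseq_aux_triangle)

lemma wseq_aux_unit_mass:
  assumes M: "0 \<le> M" and p: "\<And>i. i < n \<Longrightarrow> 0 < p i" and j: "j \<le> n"
  shows "wseq_aux 1 p (\<lambda>k. if \<forall>i<n. k i = 0 then M else 0) j k
       = (if \<forall>i\<in>{j..<n}. k i = 0 then ennreal M else 0)"
  using j
proof (induction j arbitrary: k)
  case 0
  then show ?case
    using M by auto
next
  case (Suc j)
  then have pj: "0 < p j"
    using p by simp
  define R where "R = (\<forall>i\<in>{Suc j..<n}. k i = 0)"
  have "(\<forall>i\<in>{j..<n}. (k(j := t)) i = 0) \<longleftrightarrow> t = 0 \<and> R" for t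
    using Suc.prems by (auto simp: R_def Suc_le_eq)
  then have "epowr (wseq_aux 1 p (\<lambda>k. if \<forall>i<n. k i = 0 then M else 0) j (k(j := t))) (p j)
      = (if R then ennreal (M powr p j) else 0) * indicator {0} t" for t
    using Suc M by (simp add: epowr_ennreal split: split_indicator)
  then show ?case
    using pj M by (simp add: R_def epowr_ennreal powr_powr nn_integral_cmult_indicator)
qed

section \<open>Step functions on the grid\<close>

lemma Rn_iff: "x \<in> Rn n \<longleftrightarrow> (\<forall>i\<ge>n. x i = undefined)"
  by (auto simp: Rn_def PiE_iff extensional_def)

lemma Zn_iff: "k \<in> Zn n \<longleftrightarrow> (\<forall>i\<ge>n. k i = undefined)"
  by (auto simp: Zn_def PiE_iff extensional_def)

lemma space_lebRn: "space (lebRn n) = Rn n"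
  by (simp add: lebRn_def Rn_def space_PiM)

lemma mixed_aux_mono:
  assumes "\<And>i. i < j \<Longrightarrow> 0 \<le> p i" "j \<le> n" "\<And>x. x \<in> Rn n \<Longrightarrow> \<bar>f x\<bar> \<le> \<bar>g x\<bar>"
    and "x \<in> Rn n"
  shows "mixed_aux p f j x \<le> mixed_aux p g j x"
  using assms(1,2,4)
proof (induction j arbitrary: x)
  case 0
  then show ?case
    using assms(3) by (simp add: ennreal_leI)
next
  case (Suc j)
  then have "mixed_aux p f j (x(j := t)) \<le> mixed_aux p g j (x(j := t))" for t
    by (simp add: Rn_iff)
  then show ?case
    using Suc.prems by (auto intro!: epowr_mono nn_integral_mono)
qed

lemma mixed_norm_mono:
  "(\<And>i. i < n \<Longrightarrow> 0 \<le> p i) \<Longrightarrow> (\<And>x. x \<in> Rn n \<Longrightarrow> \<bar>f x\<bar> \<le> \<bar>g x\<bar>)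
    \<Longrightarrow> mixed_norm n p f \<le> mixed_norm n p g"
  unfolding mixed_norm_def by (rule mixed_aux_mono) (auto simp: Rn_iff)

lemma nn_integral_lborel_floor:
  fixes \<phi> :: "int \<Rightarrow> ennreal"
  assumes w: "0 < w"
  shows "(\<integral>\<^sup>+t. \<phi> \<lfloor>w * t\<rfloor> \<partial>lborel) = ennreal (1 / w) * (\<integral>\<^sup>+m. \<phi> m \<partial>count_space UNIV)"
proof -
  define S where "S m = {real_of_int m / w ..< (real_of_int m + 1) / w}" for m
  have mem_S: "t \<in> S m \<longleftrightarrow> \<lfloor>w * t\<rfloor> = m" for t m
    using w by (auto simp: S_def floor_eq_iff field_simps)
  have "indicator (S m) t = (indicator {\<lfloor>w * t\<rfloor>} m :: ennreal)" for t m
    by (auto simp: mem_S split: split_indicator)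
  then have "(\<integral>\<^sup>+t. \<phi> \<lfloor>w * t\<rfloor> \<partial>lborel)
      = (\<integral>\<^sup>+t. \<integral>\<^sup>+m. \<phi> m * indicator (S m) t \<partial>count_space UNIV \<partial>lborel)"
    by simp
  also have "\<dots> = (\<integral>\<^sup>+m. \<integral>\<^sup>+t. \<phi> m * indicator (S m) t \<partial>lborel \<partial>count_space UNIV)"
    by (rule nn_integral_count_space_nn_integral) (simp_all add: S_def)
  also have "\<dots> = (\<integral>\<^sup>+m. \<phi> m * ennreal (1 / w) \<partial>count_space UNIV)"
    using w by (intro nn_integral_cong)
      (simp add: nn_integral_cmult_indicator S_def divide_right_mono add_divide_distrib)
  also have "\<dots> = ennreal (1 / w) * (\<integral>\<^sup>+m. \<phi> m \<partial>count_space UNIV)"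
    by (simp add: nn_integral_multc mult.commute)
  finally show ?thesis .
qed

text \<open>The induction may start at any level j0, so that the innermost integrations can be computed
  by hand for functions that are not step functions in the first j0 variables.\<close>

lemma mixed_aux_eq_wseq_aux:
  assumes w: "0 < w" and j: "j0 \<le> j" "j \<le> n"
    and k: "k \<in> Zn n" "\<forall>i\<in>{j..<n}. k i = \<lfloor>w * x i\<rfloor>"
    and base: "\<And>x k. k \<in> Zn n \<Longrightarrow> \<forall>i\<in>{j0..<n}. k i = \<lfloor>w * x i\<rfloor>
      \<Longrightarrow> mixed_aux p F j0 x = wseq_aux w p c j0 k"
  shows "mixed_aux p F j x = wseq_aux w p c j k"
  using j k
proof (induction j arbitrary: x k)
  case 0
  then show ?case
    using base by simp
next
  case (Suc j)
  show ?case
  proof (cases "j0 = Suc j")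
    case True
    then show ?thesis
      using base Suc.prems by simp
  next
    case False
    then have "mixed_aux p F j (x(j := t)) = wseq_aux w p c j (k(j := \<lfloor>w * t\<rfloor>))" for t
      using Suc.prems by (intro Suc.IH) (auto simp: Zn_iff)
    then show ?thesis
      using nn_integral_lborel_floor[OF w, of "\<lambda>m. epowr (wseq_aux w p c j (k(j := m))) (p j)"]
      by simp
  qed
qed

lemma mixed_norm_grid_step_function:
  assumes "0 < w"
  shows "mixed_norm n p (\<lambda>x. c (\<lambda>i. if i < n then \<lfloor>w * x i\<rfloor> else undefined)) = wseq_norm n w p c"
  unfolding mixed_norm_def wseq_norm_def
proof (rule mixed_aux_eq_wseq_aux[OF assms le0 order.refl])
  fix x k
  assume "k \<in> Zn n" "\<forall>i\<in>{0..<n}. k i = \<lfloor>w * x i\<rfloor>"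
  then have "(\<lambda>i. if i < n then \<lfloor>w * x i\<rfloor> else undefined) = k"
    by (auto simp: Zn_iff)
  then show "mixed_aux p (\<lambda>x. c (\<lambda>i. if i < n then \<lfloor>w * x i\<rfloor> else undefined)) 0 x = wseq_aux w p c 0 k"
    by simp
qed (simp_all add: Zn_iff)

lemma rel_separated_grid_selection:
  assumes w: "0 < w"
    and X: "\<And>k. k \<in> Zn n \<Longrightarrow> X k \<in> Rn n" "\<And>k i. k \<in> Zn n \<Longrightarrow> i < n \<Longrightarrow> \<lfloor>w * X k i\<rfloor> = k i"
  shows "rel_separated n X"
  unfolding rel_separated_def
proof (intro conjI exI[of _ "2 / w"] exI[of _ "3 ^ n"] ballI)
  fix y
  assume y: "y \<in> Rn n"
  define S where "S = {k \<in> Zn n. y \<in> cube n (X k) (2 / w / 2)}"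
  define P where "P = PiE {..<n} (\<lambda>i. {\<lfloor>w * y i\<rfloor> - 1 .. \<lfloor>w * y i\<rfloor> + 1})"
  have near: "\<bar>y i - X k i\<bar> < 1 / w \<longleftrightarrow> \<bar>w * y i - w * X k i\<bar> < 1" for i k
    using w by (simp add: pos_less_divide_eq abs_mult mult.commute flip: right_diff_distrib)
  have "S \<subseteq> P"
  proof
    fix k
    assume "k \<in> S"
    then have k: "k \<in> Zn n" and close: "\<forall>i<n. \<bar>w * y i - w * X k i\<bar> < 1"
      by (auto simp: S_def cube_def near)
    have "k i \<in> {\<lfloor>w * y i\<rfloor> - 1 .. \<lfloor>w * y i\<rfloor> + 1}" if "i < n" for i
    proof -
      have "\<bar>\<lfloor>w * y i\<rfloor> - \<lfloor>w * X k i\<rfloor>\<bar> \<le> 1"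
        using close[rule_format, OF that] by linarith
      then show ?thesis
        using X(2)[OF k that] by auto
    qed
    with k show "k \<in> P"
      by (auto simp: P_def Zn_def PiE_iff)
  qed
  moreover have "finite P" "card P = 3 ^ n"
    by (simp_all add: P_def finite_PiE card_PiE)
  moreover have "restrict (\<lambda>i. \<lfloor>w * y i\<rfloor>) {..<n} \<in> S" (is "?ky \<in> S")
  proof -
    have ky: "?ky \<in> Zn n"
      by (simp add: Zn_def)
    moreover have "\<bar>w * y i - w * X ?ky i\<bar> < 1" if "i < n" for i
    proof -
      have "\<lfloor>w * X ?ky i\<rfloor> = \<lfloor>w * y i\<rfloor>"
        using X(2)[OF ky that] that by simp
      then show ?thesis
        by linarith
    qed
    ultimately show ?thesis
      using X(1) y by (auto simp: S_def cube_def near)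
  qed
  ultimately have "finite S" "S \<noteq> {}" "card S \<le> 3 ^ n"
    by (auto intro: finite_subset card_mono[THEN order.trans])
  then show "1 \<le> card S" "finite S" "card S \<le> 3 ^ n"
    by (simp_all add: Suc_le_eq card_gt_0_iff)
qed (use w X in auto)

lemma ex_half_maximizer_abs:
  fixes f :: "'a \<Rightarrow> real"
  assumes "Q \<noteq> {}" "\<And>y. y \<in> Q \<Longrightarrow> \<bar>f y\<bar> \<le> B"
  shows "\<exists>y\<in>Q. \<forall>y'\<in>Q. \<bar>f y'\<bar> \<le> 2 * \<bar>f y\<bar>"
proof -
  define s where "s = (SUP y\<in>Q. \<bar>f y\<bar>)"
  have bdd: "bdd_above ((\<lambda>y. \<bar>f y\<bar>) ` Q)"
    using assms(2) by (intro bdd_aboveI[of _ B]) auto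
  have le_s: "\<bar>f y'\<bar> \<le> s" if "y' \<in> Q" for y'
    unfolding s_def using that bdd by (rule cSUP_upper)
  show ?thesis
  proof (cases "s \<le> 0")
    case True
    obtain y where "y \<in> Q"
      using assms(1) by blast
    moreover have "\<bar>f y'\<bar> \<le> 2 * \<bar>f y\<bar>" if "y' \<in> Q" for y'
      using le_s[OF that] True abs_ge_zero[of "f y"] by linarith
    ultimately show ?thesis
      by blast
  next
    case False
    then obtain y where "y \<in> Q" "s / 2 < \<bar>f y\<bar>"
      using less_cSUP_iff[OF assms(1) bdd, of "s / 2"] by (auto simp: s_def)
    moreover have "\<bar>f y'\<bar> \<le> 2 * \<bar>f y\<bar>" if "y' \<in> Q" for y'
      using le_s[OF that] \<open>s / 2 < \<bar>f y\<bar>\<close> by linarith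
    ultimately show ?thesis
      by blast
  qed
qed

lemma Delta_subset_LP:
  assumes w: "0 < w" and p: "\<And>i. i < n \<Longrightarrow> 1 \<le> p i" and f: "f \<in> Delta n w p"
  shows "f \<in> LP n p"
proof -
  obtain B where B: "\<And>x. x \<in> Rn n \<Longrightarrow> \<bar>f x\<bar> \<le> B"
    using f by (auto simp: Delta_def)
  define K where "K x = (\<lambda>i. if i < n then \<lfloor>w * x i\<rfloor> else undefined)" for x :: "nat \<Rightarrow> real"
  define Q where "Q k = {y \<in> Rn n. \<forall>i<n. \<lfloor>w * y i\<rfloor> = k i}" for k
  have "\<forall>k. \<exists>y\<in>Q k. \<forall>y'\<in>Q k. \<bar>f y'\<bar> \<le> 2 * \<bar>f y\<bar>"
  proof (intro allI ex_half_maximizer_abs)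
    fix k
    have "(\<lambda>i. if i < n then real_of_int (k i) / w else undefined) \<in> Q k"
      using w by (simp add: Q_def Rn_iff)
    then show "Q k \<noteq> {}"
      by blast
  qed (use B in \<open>auto simp: Q_def\<close>)
  then obtain X where X: "\<And>k. X k \<in> Q k" "\<And>k y. y \<in> Q k \<Longrightarrow> \<bar>f y\<bar> \<le> 2 * \<bar>f (X k)\<bar>"
    by metis
  have "rel_separated n X"
    using X(1) by (intro rel_separated_grid_selection[OF w]) (auto simp: Q_def)
  then have finite: "wseq_norm n w p (\<lambda>k. f (X k)) < \<infinity>"
    using f by (simp add: Delta_def)
  have p0: "0 < p i" if "i < n" for i
    using p[OF that] by simp
  have "mixed_norm n p f \<le> mixed_norm n p (\<lambda>x. 2 * f (X (K x)))"
  proof (rule mixed_norm_mono)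
    fix x
    assume "x \<in> Rn n"
    then have "x \<in> Q (K x)"
      by (simp add: Q_def K_def)
    then show "\<bar>f x\<bar> \<le> \<bar>2 * f (X (K x))\<bar>"
      using X(2) by (simp add: abs_mult)
  qed (use p0 in \<open>simp add: less_imp_le\<close>)
  also have "\<dots> = wseq_norm n w p (\<lambda>k. 2 * f (X k))"
    unfolding K_def by (rule mixed_norm_grid_step_function[OF w])
  also have "\<dots> = 2 * wseq_norm n w p (\<lambda>k. f (X k))"
    using p0 by (simp add: wseq_norm_cmult)
  also have "\<dots> < \<infinity>"
    using finite by (simp add: ennreal_mult_less_top)
  finally show ?thesis
    using f by (simp add: LP_def Delta_def)
qed

section \<open>An essentially unbounded function of the mixed Lebesgue space\<close>

lemma nn_integral_Icc_powr_minus_half: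
  "(\<integral>\<^sup>+t. ennreal (indicator {0..1} t * t powr (-1/2)) \<partial>lborel) = ennreal 2"
proof -
  have "((\<lambda>t::real. t powr (-1/2)) has_integral 1 powr (-1/2 + 1) / (-1/2 + 1)) {0..1}"
    by (rule has_integral_powr_from_0) auto
  then show ?thesis
    by (subst nn_integral_has_integral_lebesgue) auto
qed

text \<open>Its p_1-th power in the first variable is t^(-1/2), integrable on [0,1] but unbounded.\<close>

definition singular_fn :: "nat \<Rightarrow> (nat \<Rightarrow> real) \<Rightarrow> (nat \<Rightarrow> real) \<Rightarrow> real" where
  "singular_fn n p x =
     (if 0 \<le> x 0 \<and> x 0 \<le> 1 then x 0 powr (-1 / (2 * p 0)) else 0)
   * (if \<forall>i\<in>{1..<n}. 0 \<le> x i \<and> x i < 1 then 1 else 0)"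

lemma mixed_aux_singular_fn_1:
  assumes p: "1 \<le> p 0"
  shows "mixed_aux p (singular_fn n p) 1 x
       = (if \<forall>i\<in>{1..<n}. \<lfloor>x i\<rfloor> = 0 then ennreal (2 powr (1 / p 0)) else 0)"
proof (cases "\<forall>i\<in>{1..<n}. \<lfloor>x i\<rfloor> = 0")
  case True
  then have "epowr (ennreal \<bar>singular_fn n p (x(0 := t))\<bar>) (p 0)
      = ennreal (indicator {0..1} t * t powr (-1/2))" for t
    using p by (auto simp: singular_fn_def floor_eq_iff epowr_ennreal powr_powr split: split_indicator)
  then have "(\<integral>\<^sup>+t. epowr (ennreal \<bar>singular_fn n p (x(0 := t))\<bar>) (p 0) \<partial>lborel) = ennreal 2"
    by (simp only: nn_integral_Icc_powr_minus_half)
  then show ?thesis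
    using True by (simp add: epowr_def)
next
  case False
  then have "singular_fn n p (x(0 := t)) = 0" for t
    by (auto simp: singular_fn_def floor_eq_iff)
  then show ?thesis
    using False by simp
qed

lemma mixed_norm_singular_fn:
  assumes n: "1 \<le> n" and p: "\<And>i. i < n \<Longrightarrow> 1 \<le> p i"
  shows "mixed_norm n p (singular_fn n p) = ennreal (2 powr (1 / p 0))"
proof -
  define M where "M = 2 powr (1 / p 0)"
  define c where "c k = (if \<forall>i<n. k i = 0 then M else 0)" for k :: "nat \<Rightarrow> int"
  have p0: "0 < p i" if "i < n" for i
    using p[OF that] by simp
  have p_0: "1 \<le> p 0"
    using p n by simp
  have unit: "wseq_aux 1 p c j k = (if \<forall>i\<in>{j..<n}. k i = 0 then ennreal M else 0)"
    if "j \<le> n" for j k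
    unfolding c_def using that p0 by (intro wseq_aux_unit_mass) (simp_all add: M_def)
  have "mixed_norm n p (singular_fn n p) = wseq_aux 1 p c n (\<lambda>_. undefined)"
    unfolding mixed_norm_def
  proof (rule mixed_aux_eq_wseq_aux[of 1 1 n])
    fix x :: "nat \<Rightarrow> real" and k :: "nat \<Rightarrow> int"
    assume "\<forall>i\<in>{1..<n}. k i = \<lfloor>1 * x i\<rfloor>"
    then show "mixed_aux p (singular_fn n p) 1 x = wseq_aux 1 p c 1 k"
      unfolding unit[OF n] mixed_aux_singular_fn_1[where p = p, OF p_0] M_def by simp
  qed (use n in \<open>simp_all add: Zn_iff\<close>)
  also have "\<dots> = ennreal M"
    by (simp add: unit)
  finally show ?thesis
    by (simp add: M_def)
qed

lemma singular_fn_measurable: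
  assumes "1 \<le> n"
  shows "singular_fn n p \<in> borel_measurable (lebRn n)"
proof -
  have component: "(\<lambda>x. x i) \<in> borel_measurable (lebRn n)" if "i < n" for i
    unfolding lebRn_def using that by (simp add: measurable_component_singleton)
  have "(\<lambda>t::real. 0 \<le> t \<and> t < 1) \<in> measurable borel (count_space UNIV)"
    by measurable
  then have "(\<lambda>x. 0 \<le> x i \<and> x i < 1) \<in> measurable (lebRn n) (count_space UNIV)" if "i < n" for i
    by (rule measurable_compose[OF component[OF that]])
  then have [measurable]: "(\<lambda>x. \<forall>i\<in>{1..<n}. 0 \<le> x i \<and> x i < 1) \<in> measurable (lebRn n) (count_space UNIV)"
    by (intro pred_intros_finite) auto
  have [measurable]: "(\<lambda>x. x 0) \<in> borel_measurable (lebRn n)"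
    using component assms by simp
  show ?thesis
    unfolding singular_fn_def [abs_def] by measurable
qed

lemma singular_fn_in_LP:
  "1 \<le> n \<Longrightarrow> (\<And>i. i < n \<Longrightarrow> 1 \<le> p i) \<Longrightarrow> singular_fn n p \<in> LP n p"
  by (simp add: LP_def singular_fn_measurable mixed_norm_singular_fn)

lemma singular_fn_not_AE_bounded:
  assumes n: "1 \<le> n" and p: "1 \<le> p 0"
  shows "\<not> (AE x in lebRn n. \<bar>singular_fn n p x\<bar> \<le> B)"
proof
  assume bounded: "AE x in lebRn n. \<bar>singular_fn n p x\<bar> \<le> B"
  define B' where "B' = max B 1"
  define \<delta> where "\<delta> = B' powr (-2 * p 0)"
  have \<delta>: "0 < \<delta>" "\<delta> \<le> 1" "\<delta> powr (-1 / (2 * p 0)) = B'"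
    using p powr_mono[of "-2 * p 0" 0 B'] by (auto simp: \<delta>_def B'_def powr_powr split: if_splits)
  define A where "A i = (if i = 0 then {0<..<\<delta>} else {0..<1::real})" for i :: nat
  define E where "E = PiE {..<n} A"
  have E: "E \<in> sets (lebRn n)"
    unfolding E_def lebRn_def by (rule sets_PiM_I_finite) (auto simp: A_def)
  have large: "B < \<bar>singular_fn n p x\<bar>" if "x \<in> E" for x
  proof -
    have mem: "x i \<in> A i" if "i < n" for i
      using \<open>x \<in> E\<close> that by (simp add: E_def PiE_iff)
    have x0: "0 < x 0" "x 0 < \<delta>"
      using mem[of 0] n by (simp_all add: A_def)
    moreover have "\<forall>i\<in>{1..<n}. 0 \<le> x i \<and> x i < 1"
      using mem by (force simp: A_def)
    ultimately have "singular_fn n p x = x 0 powr (-1 / (2 * p 0))"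
      using \<delta>(2) by (simp add: singular_fn_def)
    moreover have "\<delta> powr (-1 / (2 * p 0)) < x 0 powr (-1 / (2 * p 0))"
      using x0 p by (intro powr_less_mono2_neg) auto
    ultimately show ?thesis
      using \<delta>(3) by (simp add: B'_def)
  qed
  have "AE x in lebRn n. x \<notin> E"
    using bounded by eventually_elim (use large in force)
  then have "emeasure (lebRn n) E = 0"
    using AE_iff_null_sets[OF E] by (simp add: null_sets_def)
  moreover have "emeasure (lebRn n) E = (\<Prod>i<n. emeasure lborel (A i))"
    unfolding lebRn_def E_def
    by (rule product_sigma_finite.emeasure_PiM) (auto simp: A_def product_sigma_finite_def sigma_finite_lborel)
  moreover have "(\<Prod>i<n. emeasure lborel (A i)) \<noteq> 0"
    using \<delta>(1) by (simp add: A_def)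
  ultimately show False
    by simp
qed

lemma Delta_not_AE_eq_singular_fn:
  assumes "1 \<le> n" "1 \<le> p 0" "f \<in> Delta n w p"
  shows "\<not> (AE x in lebRn n. f x = singular_fn n p x)"
proof
  assume "AE x in lebRn n. f x = singular_fn n p x"
  moreover obtain B where "\<And>x. x \<in> Rn n \<Longrightarrow> \<bar>f x\<bar> \<le> B"
    using assms(3) by (auto simp: Delta_def)
  then have "AE x in lebRn n. \<bar>f x\<bar> \<le> B"
    by (intro AE_I2) (simp add: space_lebRn)
  ultimately have "AE x in lebRn n. \<bar>singular_fn n p x\<bar> \<le> B"
    by eventually_elim simp
  then show False
    using singular_fn_not_AE_bounded[where p = p, OF assms(1,2)] by blast
qed

lemma zero_in_Delta: "(\<lambda>x. 0) \<in> Delta n w p"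
  by (auto simp: Delta_def wseq_norm_def intro: exI[of _ 0])

lemma Delta_add:
  assumes "0 < w" "\<And>i. i < n \<Longrightarrow> 1 \<le> p i" and f: "f \<in> Delta n w p" and g: "g \<in> Delta n w p"
  shows "(\<lambda>x. f x + g x) \<in> Delta n w p"
proof -
  obtain B C where "\<forall>x\<in>Rn n. \<bar>f x\<bar> \<le> B" "\<forall>x\<in>Rn n. \<bar>g x\<bar> \<le> C"
    using f g by (auto simp: Delta_def)
  then have "\<forall>x\<in>Rn n. \<bar>f x + g x\<bar> \<le> B + C"
    by (auto intro: abs_triangle_ineq[THEN order.trans] add_mono)
  moreover have "wseq_norm n w p (\<lambda>k. f (X k) + g (X k)) < \<infinity>" if "rel_separated n X" for X
    using wseq_norm_triangle[where n = n and p = p, OF assms(1,2), of "\<lambda>k. f (X k)" "\<lambda>k. g (X k)"] f g that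
    by (auto simp: Delta_def order.strict_trans1)
  ultimately show ?thesis
    using f g by (auto simp: Delta_def)
qed

lemma Delta_cmult:
  assumes "\<And>i. i < n \<Longrightarrow> 0 < p i" and f: "f \<in> Delta n w p"
  shows "(\<lambda>x. c * f x) \<in> Delta n w p"
proof -
  obtain B where "\<forall>x\<in>Rn n. \<bar>f x\<bar> \<le> B"
    using f by (auto simp: Delta_def)
  then have "\<forall>x\<in>Rn n. \<bar>c * f x\<bar> \<le> \<bar>c\<bar> * B"
    by (simp add: abs_mult mult_left_mono)
  then show ?thesis
    using f by (auto simp: Delta_def wseq_norm_cmult[OF assms(1)] ennreal_mult_less_top)
qed

lemma delta_norm_finite:
  assumes "0 < w" "f \<in> Delta n w p"
  shows "delta_norm n w p f < \<infinity>"
proof -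
  have "rel_separated n (\<lambda>k i. if i < n then real_of_int (k i) / w else undefined)"
    using assms(1) by (intro rel_separated_grid_selection) (auto simp: Rn_iff)
  then show ?thesis
    using assms(2) by (simp add: Delta_def delta_norm_def)
qed

lemma delta_norm_cmult:
  "(\<And>i. i < n \<Longrightarrow> 0 < p i) \<Longrightarrow> delta_norm n w p (\<lambda>x. c * f x) = ennreal \<bar>c\<bar> * delta_norm n w p f"
  unfolding delta_norm_def by (rule wseq_norm_cmult)

lemma delta_norm_triangle:
  "0 < w \<Longrightarrow> (\<And>i. i < n \<Longrightarrow> 1 \<le> p i)
    \<Longrightarrow> delta_norm n w p (\<lambda>x. f x + g x) \<le> delta_norm n w p f + delta_norm n w p g"
  unfolding delta_norm_def by (rule wseq_norm_triangle)

theorem proposition3p3: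
  fixes n :: nat and w :: real and p :: "nat \<Rightarrow> real"
  assumes "n \<ge> 1" and "w > 0"
    and "1 \<le> p 0" and "\<And>i j. i \<le> j \<Longrightarrow> j < n \<Longrightarrow> p i \<le> p j"
  shows "Delta n w p \<subseteq> LP n p
    \<and> (\<lambda>x. 0) \<in> Delta n w p
    \<and> (\<forall>f\<in>Delta n w p. \<forall>g\<in>Delta n w p. (\<lambda>x. f x + g x) \<in> Delta n w p)
    \<and> (\<forall>f\<in>Delta n w p. \<forall>c::real. (\<lambda>x. c * f x) \<in> Delta n w p)
    \<and> (\<exists>g\<in>LP n p. \<forall>f\<in>Delta n w p. \<not> (AE x in lebRn n. f x = g x))
    \<and> (\<forall>f\<in>Delta n w p. delta_norm n w p f < \<infinity>)
    \<and> (\<forall>f\<in>Delta n w p. \<forall>c::real.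
          delta_norm n w p (\<lambda>x. c * f x) = ennreal \<bar>c\<bar> * delta_norm n w p f)
    \<and> (\<forall>f\<in>Delta n w p. \<forall>g\<in>Delta n w p.
          delta_norm n w p (\<lambda>x. f x + g x) \<le> delta_norm n w p f + delta_norm n w p g)"
proof -
  have p1: "1 \<le> p i" if "i < n" for i
    using assms(3) assms(4)[OF le0 that] by simp
  then have p0: "0 < p i" if "i < n" for i
    using that by (simp add: less_le_trans[OF zero_less_one])
  show ?thesis
  proof (intro conjI)
    show "Delta n w p \<subseteq> LP n p"
      using Delta_subset_LP[where p = p, OF assms(2) p1] by blast
    show "(\<lambda>x. 0) \<in> Delta n w p"
      by (rule zero_in_Delta)
    show "\<forall>f\<in>Delta n w p. \<forall>g\<in>Delta n w p. (\<lambda>x. f x + g x) \<in> Delta n w p"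
      using Delta_add[where p = p, OF assms(2) p1] by blast
    show "\<forall>f\<in>Delta n w p. \<forall>c. (\<lambda>x. c * f x) \<in> Delta n w p"
      using Delta_cmult[where p = p, OF p0] by blast
    show "\<exists>g\<in>LP n p. \<forall>f\<in>Delta n w p. \<not> (AE x in lebRn n. f x = g x)"
      using singular_fn_in_LP[where p = p, OF assms(1) p1]
        Delta_not_AE_eq_singular_fn[where p = p, OF assms(1,3)] by blast
    show "\<forall>f\<in>Delta n w p. delta_norm n w p f < \<infinity>"
      using delta_norm_finite[OF assms(2)] by blast
    show "\<forall>f\<in>Delta n w p. \<forall>c. delta_norm n w p (\<lambda>x. c * f x) = ennreal \<bar>c\<bar> * delta_norm n w p f"
      using delta_norm_cmult[where p = p, OF p0] by blast
    show "\<forall>f\<in>Delta n w p. \<forall>g\<in>Delta n w p.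
        delta_norm n w p (\<lambda>x. f x + g x) \<le> delta_norm n w p f + delta_norm n w p g"
      using delta_norm_triangle[where p = p, OF assms(2) p1] by blast
  qed
qed

end
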